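(* Let $P(\lambda,\mu)\in\mathbb{C}[\lambda,\mu]$, let $\ell\subset\mathbb{C}$ be a closed half-line emanating from the origin, and let $N$ be a positive integer. Let $B$ be the sum of the absolute values of all coefficients of the two partial derivatives $\partial P/\partial\lambda$ and $\partial P/\partial\mu$. If for all $j,k\in\{0,1,\dots,N-1\}$ the distance from $P(e^{2\pi ij/N},e^{2\pi ik/N})$ to $\ell$ exceeds $\pi B/N$, then the equation $P(\lambda,\mu)=0$ has no solution $(\lambda,\mu)\in\mathbb{C}^2$ with $|\lambda|\le1$ and $|\mu|\le1$. *)

theory Defs
  imports "HOL-Analysis.Analysis" "HOL-Computational_Algebra.Polynomial"
begin

text \<open>A bivariate polynomial P(lambda, mu) in C[lambda, mu] is represented as an element of
  C[lambda][mu], i.e. a polynomial in mu whose coefficients are polynomials in lambda.\<close>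

type_synonym bipoly = "complex poly poly"

definition bieval :: "bipoly \<Rightarrow> complex \<Rightarrow> complex \<Rightarrow> complex" where
  "bieval P l m = poly (map_poly (\<lambda>q. poly q l) P) m"

definition dlambda :: "bipoly \<Rightarrow> bipoly" where
  "dlambda P = map_poly pderiv P"

definition dmu :: "bipoly \<Rightarrow> bipoly" where
  "dmu P = pderiv P"

definition coeff_abs_sum :: "bipoly \<Rightarrow> real" where
  "coeff_abs_sum P = (\<Sum>j\<le>degree P. \<Sum>i\<le>degree (coeff P j). norm (coeff (coeff P j) i))"

definition halfline :: "complex \<Rightarrow> complex set" where
  "halfline d = {complex_of_real t * d | t. t \<ge> 0}"

end

theory Submission
  imports Defs "HOL-Complex_Analysis.Complex_Analysis"
begin

text \<open>On the torus \<open>|\<lambda>| = |\<mu>| = 1\<close>, every point lies within \<open>\<pi>/N\<close> in each coordinate of a pair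
  of \<open>N\<close>-th roots of unity, and on the closed unit bidisc \<open>P\<close> is Lipschitz in each variable with
  constant the coefficient sum of the corresponding partial derivative. Hence the hypothesis keeps
  \<open>P\<close> off the half-line \<open>\<ell>\<close> on the whole torus. Since \<open>\<ell>\<close> is connected and unbounded, an entire
  function that avoids \<open>\<ell>\<close> on the unit circle avoids it on the closed unit disc: otherwise \<open>\<ell>\<close> meets
  the frontier of the compact image of the disc, and by the open mapping theorem that frontier only
  consists of values taken on the circle. Applying this first in \<open>\<lambda>\<close> and then in \<open>\<mu>\<close> keeps \<open>P\<close> off
  \<open>\<ell>\<close>, and in particular away from \<open>0 \<in> \<ell>\<close>, on the whole bidisc.\<close>

lemma poly_eq_sum_upto:
  fixes p :: "'a::comm_semiring_1 poly"
  assumes "degree p \<le> n"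
  shows "poly p x = (\<Sum>i\<le>n. coeff p i * x ^ i)"
  unfolding poly_altdef
  by (rule sum.mono_neutral_left) (use assms in \<open>auto simp: coeff_eq_0\<close>)

lemma bieval_eq_sum:
  assumes "degree P \<le> n"
  shows "bieval P l m = (\<Sum>j\<le>n. poly (coeff P j) l * m ^ j)"
proof -
  have "degree (map_poly (\<lambda>q. poly q l) P) \<le> n"
    using map_poly_degree_leq[of "\<lambda>q. poly q l" P] assms by linarith
  then show ?thesis
    unfolding bieval_def by (simp add: poly_eq_sum_upto coeff_map_poly)
qed

lemma norm_poly_le_coeff_sum:
  fixes p :: "'a::{real_normed_div_algebra, comm_semiring_1} poly"
  assumes "norm x \<le> 1"
  shows "norm (poly p x) \<le> (\<Sum>i\<le>degree p. norm (coeff p i))"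
proof -
  have "norm (poly p x) \<le> (\<Sum>i\<le>degree p. norm (coeff p i * x ^ i))"
    unfolding poly_altdef by (rule norm_sum)
  also have "\<dots> \<le> (\<Sum>i\<le>degree p. norm (coeff p i))"
    using assms by (intro sum_mono) (simp add: norm_mult norm_power power_le_one mult_left_le)
  finally show ?thesis .
qed

lemma coeff_abs_sum_nonneg: "coeff_abs_sum Q \<ge> 0"
  unfolding coeff_abs_sum_def by (intro sum_nonneg) auto

lemma norm_bieval_le_coeff_abs_sum:
  assumes "norm l \<le> 1" "norm m \<le> 1"
  shows "norm (bieval Q l m) \<le> coeff_abs_sum Q"
proof -
  have "norm (bieval Q l m) \<le> (\<Sum>j\<le>degree Q. norm (poly (coeff Q j) l * m ^ j))"
    unfolding bieval_eq_sum[OF order_refl] by (rule norm_sum)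
  also have "\<dots> \<le> (\<Sum>j\<le>degree Q. norm (poly (coeff Q j) l))"
    using assms(2) by (intro sum_mono) (simp add: norm_mult norm_power power_le_one mult_left_le)
  also have "\<dots> \<le> coeff_abs_sum Q"
    unfolding coeff_abs_sum_def by (intro sum_mono norm_poly_le_coeff_sum assms(1))
  finally show ?thesis .
qed

lemma bieval_has_field_derivative_lambda:
  "((\<lambda>l. bieval P l m) has_field_derivative bieval (dlambda P) l m) (at l)"
proof -
  have "degree (dlambda P) \<le> degree P"
    unfolding dlambda_def by (rule map_poly_degree_leq)
  moreover have "coeff (dlambda P) j = pderiv (coeff P j)" for j
    unfolding dlambda_def by (simp add: coeff_map_poly)
  ultimately have "bieval (dlambda P) l m = (\<Sum>j\<le>degree P. poly (pderiv (coeff P j)) l * m ^ j)"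
    by (simp add: bieval_eq_sum)
  then show ?thesis
    unfolding bieval_eq_sum[OF order_refl, of P]
    by (auto intro!: DERIV_sum DERIV_cmult_right poly_DERIV)
qed

lemma bieval_has_field_derivative_mu:
  "((\<lambda>m. bieval P l m) has_field_derivative bieval (dmu P) l m) (at m)"
proof -
  have "map_poly (\<lambda>q. poly q l) (pderiv P) = pderiv (map_poly (\<lambda>q. poly q l) P)"
    by (rule poly_eqI) (simp add: coeff_pderiv coeff_map_poly)
  then show ?thesis
    unfolding bieval_def dmu_def by (simp add: poly_DERIV)
qed

lemma bieval_holomorphic_lambda: "(\<lambda>l. bieval P l m) holomorphic_on S"
  unfolding holomorphic_on_def field_differentiable_def
  using bieval_has_field_derivative_lambda has_field_derivative_at_within by blast

lemma bieval_holomorphic_mu: "(\<lambda>m. bieval P l m) holomorphic_on S"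
  unfolding holomorphic_on_def field_differentiable_def
  using bieval_has_field_derivative_mu has_field_derivative_at_within by blast

lemma norm_bieval_diff_le:
  assumes "norm l \<le> 1" "norm l' \<le> 1" "norm m \<le> 1" "norm m' \<le> 1"
  shows "norm (bieval P l m - bieval P l' m') \<le>
    coeff_abs_sum (dlambda P) * norm (l - l') + coeff_abs_sum (dmu P) * norm (m - m')"
proof -
  have "norm (bieval P l m - bieval P l' m) \<le> coeff_abs_sum (dlambda P) * norm (l - l')"
    by (rule field_differentiable_bound[where S="cball 0 1" and f'="\<lambda>z. bieval (dlambda P) z m"])
       (auto intro: has_field_derivative_at_within bieval_has_field_derivative_lambda
         norm_bieval_le_coeff_abs_sum simp: assms)
  moreover have "norm (bieval P l' m - bieval P l' m') \<le> coeff_abs_sum (dmu P) * norm (m - m')"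
    by (rule field_differentiable_bound[where S="cball 0 1" and f'="\<lambda>z. bieval (dmu P) l' z"])
       (auto intro: has_field_derivative_at_within bieval_has_field_derivative_mu
         norm_bieval_le_coeff_abs_sum simp: assms)
  ultimately show ?thesis
    using norm_triangle_ineq[of "bieval P l m - bieval P l' m" "bieval P l' m - bieval P l' m'"]
    by simp
qed

lemma norm_exp_i_diff_le: "norm (exp (\<i> * of_real a) - exp (\<i> * of_real b)) \<le> \<bar>a - b\<bar>"
proof -
  have "exp (\<i> * of_real a) - exp (\<i> * of_real b) = exp (\<i> * of_real b) * (exp (\<i> * of_real (a - b)) - 1)"
    by (simp add: algebra_simps flip: exp_add)
  then have "norm (exp (\<i> * of_real a) - exp (\<i> * of_real b)) = norm (exp (\<i> * of_real (a - b)) - 1)"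
    by (simp add: norm_mult del: of_real_diff)
  also have "\<dots> = 2 * \<bar>sin ((a - b) / 2)\<bar>"
    by (rule dist_exp_i_1)
  also have "\<dots> \<le> \<bar>a - b\<bar>"
    using abs_sin_x_le_abs_x[of "(a - b) / 2"] by simp
  finally show ?thesis .
qed

lemma exp_2pi_i_int_div_eq_mod:
  assumes "N > 0"
  shows "exp (2 * pi * \<i> * of_int r / of_nat N) = exp (2 * pi * \<i> * of_nat (nat (r mod int N)) / of_nat N)"
proof -
  have "of_int r = (of_nat (nat (r mod int N)) + of_nat N * of_int (r div int N) :: complex)"
    using assms by (metis (mono_tags) int_nat_eq mod_mult_div_eq of_int_add of_int_mult
        of_int_of_nat_eq pos_mod_sign of_nat_0_less_iff)
  then have "2 * pi * \<i> * of_int r / of_nat N =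
      2 * pi * \<i> * of_nat (nat (r mod int N)) / of_nat N + 2 * of_int (r div int N) * pi * \<i>"
    using assms by (simp add: field_simps)
  moreover have "exp (2 * of_int (r div int N) * pi * \<i>) = 1"
    using exp_integer_2pi[of "of_int (r div int N)"] by simp
  ultimately show ?thesis
    by (simp add: exp_add)
qed

lemma exists_root_of_unity_near:
  assumes "norm z = 1" "N > 0"
  shows "\<exists>j<N. norm (z - exp (2 * pi * \<i> * of_nat j / of_nat N)) \<le> pi / real N"
proof -
  define x where "x = Arg z * real N / (2 * pi)"
  define j where "j = nat (round x mod int N)"
  have "j < N"
    using assms(2) by (simp add: j_def nat_less_iff)
  have "z \<noteq> 0"
    using assms(1) by auto
  then have z: "z = exp (\<i> * of_real (Arg z))"
    using Arg_eq[of z] assms(1) by simp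
  have root: "exp (2 * pi * \<i> * of_nat j / of_nat N) = exp (\<i> * of_real (2 * pi * round x / N))"
    unfolding j_def exp_2pi_i_int_div_eq_mod[OF assms(2), symmetric] by (simp add: mult_ac)
  have "norm (z - exp (2 * pi * \<i> * of_nat j / of_nat N)) \<le> \<bar>Arg z - 2 * pi * round x / N\<bar>"
    by (subst z, unfold root) (rule norm_exp_i_diff_le)
  also have "Arg z - 2 * pi * round x / N = 2 * pi / N * (x - round x)"
    using assms(2) by (simp add: x_def field_simps)
  also have "\<bar>\<dots>\<bar> = 2 * pi / N * \<bar>x - round x\<bar>"
    by (simp add: abs_mult)
  also have "\<dots> \<le> 2 * pi / N * (1 / 2)"
    using of_int_round_abs_le[of x] by (intro mult_left_mono) (auto simp: abs_minus_commute)
  finally show ?thesis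
    using \<open>j < N\<close> by auto
qed

lemma connected_halfline: "connected (halfline d)"
proof -
  have "halfline d = (\<lambda>t. complex_of_real t * d) ` {0..}"
    unfolding halfline_def by auto
  then show ?thesis
    by (metis connected_continuous_image convex_connected convex_real_interval(1)
        continuous_on_mult_right continuous_on_of_real_id)
qed

lemma unbounded_halfline:
  assumes "d \<noteq> 0"
  shows "\<not> bounded (halfline d)"
proof
  assume "bounded (halfline d)"
  then obtain B where B: "\<And>w. w \<in> halfline d \<Longrightarrow> norm w \<le> B"
    by (auto simp: bounded_iff)
  define t where "t = (\<bar>B\<bar> + 1) / norm d"
  have "t \<ge> 0"
    by (simp add: t_def)
  then have "complex_of_real t * d \<in> halfline d"
    unfolding halfline_def by blast
  moreover have "norm (complex_of_real t * d) = t * norm d"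
    using \<open>t \<ge> 0\<close> by (simp add: norm_mult)
  moreover have "t * norm d = \<bar>B\<bar> + 1"
    using assms by (simp add: t_def)
  ultimately show False
    using B by force
qed

lemma entire_not_in_on_disc_if_not_in_on_circle:
  fixes f :: "complex \<Rightarrow> complex"
  assumes hol: "f holomorphic_on UNIV" and S: "connected S" "\<not> bounded S"
    and circle: "\<And>w. norm w = 1 \<Longrightarrow> f w \<notin> S"
    and z: "norm z \<le> 1"
  shows "f z \<notin> S"
proof
  assume "f z \<in> S"
  show False
  proof (cases "f constant_on UNIV")
    case True
    then have "f z = f 1"
      by (auto simp: constant_on_def)
    with \<open>f z \<in> S\<close> circle[of 1] show False
      by simp
  next
    case False
    define K where "K = f ` cball 0 1"
    have "compact K"
      unfolding K_def by (intro compact_continuous_image holomorphic_on_imp_continuous_on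
          holomorphic_on_subset[OF hol]) auto
    have "S \<inter> frontier K \<noteq> {}"
    proof (rule connected_Int_frontier[OF S(1)])
      show "S \<inter> K \<noteq> {}"
        using \<open>f z \<in> S\<close> z by (auto simp: K_def)
      show "S - K \<noteq> {}"
        using S(2) compact_imp_bounded[OF \<open>compact K\<close>] bounded_subset by blast
    qed
    then obtain w where "w \<in> S" "w \<in> frontier K"
      by blast
    then obtain z' where z': "norm z' \<le> 1" "w = f z'" "w \<notin> interior K"
      using \<open>compact K\<close> by (auto simp: K_def frontier_def compact_imp_closed)
    have "open (f ` ball 0 1)"
      by (rule open_mapping_thm[OF hol]) (use False in auto)
    then have "f ` ball 0 1 \<subseteq> interior K"
      by (intro interior_maximal) (auto simp: K_def)
    with z' have "norm z' = 1"
      by (metis image_eqI le_less mem_ball_0 subsetD)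
    with circle z' \<open>w \<in> S\<close> show False
      by auto
  qed
qed

lemma bieval_not_in_on_torus:
  assumes "N > 0"
    and grid: "\<And>j k. j < N \<Longrightarrow> k < N \<Longrightarrow>
           infdist (bieval P (exp (2 * pi * \<i> * of_nat j / of_nat N))
                             (exp (2 * pi * \<i> * of_nat k / of_nat N))) S
           > pi * (coeff_abs_sum (dlambda P) + coeff_abs_sum (dmu P)) / real N"
    and "norm l = 1" "norm m = 1"
  shows "bieval P l m \<notin> S"
proof
  assume "bieval P l m \<in> S"
  define A where "A = coeff_abs_sum (dlambda P)"
  define C where "C = coeff_abs_sum (dmu P)"
  define \<omega> where "\<omega> j = exp (2 * pi * \<i> * of_nat j / of_nat N)" for j
  have norm_\<omega>: "norm (\<omega> j) = 1" for j
    unfolding \<omega>_def using norm_exp_i_times[of "2 * pi * j / N"] by (simp add: mult_ac)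
  obtain j where j: "j < N" "norm (l - \<omega> j) \<le> pi / N"
    using exists_root_of_unity_near[OF \<open>norm l = 1\<close> \<open>N > 0\<close>] unfolding \<omega>_def by blast
  obtain k where k: "k < N" "norm (m - \<omega> k) \<le> pi / N"
    using exists_root_of_unity_near[OF \<open>norm m = 1\<close> \<open>N > 0\<close>] unfolding \<omega>_def by blast
  have "dist (bieval P (\<omega> j) (\<omega> k)) (bieval P l m) \<le> A * norm (l - \<omega> j) + C * norm (m - \<omega> k)"
    unfolding A_def C_def dist_norm norm_minus_commute[of "bieval P (\<omega> j) (\<omega> k)"]
    by (rule norm_bieval_diff_le) (simp_all add: norm_\<omega> assms)
  also have "\<dots> \<le> A * (pi / N) + C * (pi / N)"
    using j k coeff_abs_sum_nonneg unfolding A_def C_def by (intro add_mono mult_left_mono) auto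
  also have "\<dots> = pi * (A + C) / N"
    by (simp add: field_simps add_divide_distrib)
  finally have "infdist (bieval P (\<omega> j) (\<omega> k)) S \<le> pi * (A + C) / N"
    using infdist_triangle[of "bieval P (\<omega> j) (\<omega> k)" S "bieval P l m"] \<open>bieval P l m \<in> S\<close>
    by simp
  with grid[OF j(1) k(1)] show False
    unfolding A_def C_def \<omega>_def by simp
qed

theorem lemma5p2:
  fixes P :: bipoly and d :: complex and N :: nat
  assumes "d \<noteq> 0" and "N > 0"
    and "\<And>j k. j < N \<Longrightarrow> k < N \<Longrightarrow>
           infdist (bieval P (exp (2 * pi * \<i> * of_nat j / of_nat N))
                             (exp (2 * pi * \<i> * of_nat k / of_nat N))) (halfline d)
           > pi * (coeff_abs_sum (dlambda P) + coeff_abs_sum (dmu P)) / real N"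
  shows "\<not> (\<exists>l m. norm l \<le> 1 \<and> norm m \<le> 1 \<and> bieval P l m = 0)"
proof -
  note avoid = entire_not_in_on_disc_if_not_in_on_circle
    [OF _ connected_halfline unbounded_halfline[OF \<open>d \<noteq> 0\<close>]]
  have "bieval P l m \<notin> halfline d" if "norm l \<le> 1" "norm m = 1" for l m
    using avoid[OF bieval_holomorphic_lambda _ \<open>norm l \<le> 1\<close>]
      bieval_not_in_on_torus[OF assms(2,3) _ \<open>norm m = 1\<close>] by blast
  then have "bieval P l m \<notin> halfline d" if "norm l \<le> 1" "norm m \<le> 1" for l m
    using avoid[OF bieval_holomorphic_mu _ \<open>norm m \<le> 1\<close>] \<open>norm l \<le> 1\<close> by blast
  moreover have "0 \<in> halfline d"
    unfolding halfline_def by auto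
  ultimately show ?thesis
    by metis
qed

end
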